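(* Let $\Phi$ be a channel matrix whose rows $P^1,P^2,P^3\in\Delta^n$ are in general position, let $Q^0$ be the equidistant point from $P^1,P^2,P^3$ and $\boldsymbol\lambda^0$ its barycentric coordinate. Suppose $\lambda^0_1<0$, $\lambda^0_2\ge0$, $\lambda^0_3\ge0$, and let $Q^1=\pi(Q^0|L(P^2,P^3))$. Then the output distribution achieving the channel capacity is $Q^\ast=Q^1$ and the channel capacity is $C=D(P^2\|Q^1)$.
   Context: $\Delta^n=\{Q:Q_j>0,\sum_jQ_j=1\}$, $\bar\Delta^m=\{\boldsymbol\lambda:\lambda_i\ge0,\sum_i\lambda_i=1\}$; $D(Q\|Q')=\sum_jQ_j\log(Q_j/Q'_j)$. Rows are in general position if $P^2-P^1,\dots,P^m-P^1$ are linearly independent. $L(S^1,\dots,S^r)=\{\sum_i\lambda_iS^i:\sum_i\lambda_i=1\}\cap\Delta^n$; for such an affine subspace $L$, $\pi(Q'|L)$ is the unique $Q\in L$ minimizing $D(Q\|Q')$. The barycentric coordinate of $Q\in L(P^1,\dots,P^m)$ is the unique $\boldsymbol\lambda$ with $\sum_i\lambda_i=1$, $Q=\sum_i\lambda_iP^i$. The equidistant point is the unique $Q^0\in L(P^1,\dots,P^m)$ with all $D(P^i\|Q^0)$ equal. Mutual information $I(\boldsymbol\lambda,\Phi)=\sum_{i,j}\lambda_iP^i_j\log(P^i_j/Q_j)$ with $Q=\boldsymbol\lambda\Phi$; capacity $C=\max_{\boldsymbol\lambda\in\bar\Delta^m}I(\boldsymbol\lambda,\Phi)$; the capacity-achieving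 output distribution is $Q^\ast=\boldsymbol\lambda^\ast\Phi$ for a maximizer $\boldsymbol\lambda^\ast$ (unique). *)

theory Defs
  imports "HOL-Analysis.Analysis"
begin

text \<open>Output alphabet: a finite type 'b (n = CARD('b)).
  A channel matrix with m rows is P :: nat \<Rightarrow> 'b \<Rightarrow> real, rows P 1, ..., P m.\<close>

definition open_simplex :: "('b::finite \<Rightarrow> real) set" where
  "open_simplex = {Q. (\<forall>j. Q j > 0) \<and> (\<Sum>j\<in>UNIV. Q j) = 1}"

definition closed_simplex :: "nat \<Rightarrow> (nat \<Rightarrow> real) set" where
  "closed_simplex m = {lam. (\<forall>i\<in>{1..m}. lam i \<ge> 0) \<and> (\<Sum>i=1..m. lam i) = 1
                          \<and> (\<forall>i. i \<notin> {1..m} \<longrightarrow> lam i = 0)}"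

definition KL :: "('b::finite \<Rightarrow> real) \<Rightarrow> ('b \<Rightarrow> real) \<Rightarrow> real" where
  "KL Q Q' = (\<Sum>j\<in>UNIV. Q j * ln (Q j / Q' j))"

definition general_position :: "nat \<Rightarrow> (nat \<Rightarrow> 'b::finite \<Rightarrow> real) \<Rightarrow> bool" where
  "general_position m P \<longleftrightarrow>
     (\<forall>c :: nat \<Rightarrow> real. (\<forall>j. (\<Sum>i=2..m. c i * (P i j - P 1 j)) = 0) \<longrightarrow> (\<forall>i\<in>{2..m}. c i = 0))"

definition affL :: "('b::finite \<Rightarrow> real) list \<Rightarrow> ('b \<Rightarrow> real) set" where
  "affL Ss = {Q \<in> open_simplex. \<exists>mu :: nat \<Rightarrow> real. (\<Sum>i<length Ss. mu i) = 1 \<and>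
                 (\<forall>j. Q j = (\<Sum>i<length Ss. mu i * (Ss ! i) j))}"

definition rows :: "nat \<Rightarrow> (nat \<Rightarrow> 'b \<Rightarrow> real) \<Rightarrow> ('b \<Rightarrow> real) list" where
  "rows m P = map P [1..<Suc m]"

definition Iproj :: "('b::finite \<Rightarrow> real) \<Rightarrow> ('b \<Rightarrow> real) set \<Rightarrow> ('b \<Rightarrow> real)" where
  "Iproj Q' L = (THE Q. Q \<in> L \<and> (\<forall>R\<in>L. KL Q Q' \<le> KL R Q'))"

definition barycentric :: "nat \<Rightarrow> (nat \<Rightarrow> 'b::finite \<Rightarrow> real) \<Rightarrow> ('b \<Rightarrow> real) \<Rightarrow> (nat \<Rightarrow> real)" where
  "barycentric m P Q = (THE lam. (\<Sum>i=1..m. lam i) = 1 \<and> (\<forall>i. i \<notin> {1..m} \<longrightarrow> lam i = 0)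
                                 \<and> (\<forall>j. Q j = (\<Sum>i=1..m. lam i * P i j)))"

definition equidistant :: "nat \<Rightarrow> (nat \<Rightarrow> 'b::finite \<Rightarrow> real) \<Rightarrow> ('b \<Rightarrow> real)" where
  "equidistant m P = (THE Q. Q \<in> affL (rows m P) \<and>
                         (\<forall>i\<in>{1..m}. \<forall>k\<in>{1..m}. KL (P i) Q = KL (P k) Q))"

definition output_dist :: "nat \<Rightarrow> (nat \<Rightarrow> 'b::finite \<Rightarrow> real) \<Rightarrow> (nat \<Rightarrow> real) \<Rightarrow> ('b \<Rightarrow> real)" where
  "output_dist m P lam = (\<lambda>j. \<Sum>i=1..m. lam i * P i j)"

definition mutual_info :: "nat \<Rightarrow> (nat \<Rightarrow> 'b::finite \<Rightarrow> real) \<Rightarrow> (nat \<Rightarrow> real) \<Rightarrow> real" where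
  "mutual_info m P lam =
     (\<Sum>i=1..m. \<Sum>j\<in>UNIV. lam i * P i j * ln (P i j / output_dist m P lam j))"

definition capacity :: "nat \<Rightarrow> (nat \<Rightarrow> 'b::finite \<Rightarrow> real) \<Rightarrow> real" where
  "capacity m P = (SUP lam\<in>closed_simplex m. mutual_info m P lam)"

definition capacity_output :: "nat \<Rightarrow> (nat \<Rightarrow> 'b::finite \<Rightarrow> real) \<Rightarrow> ('b \<Rightarrow> real)" where
  "capacity_output m P = (THE Q. \<exists>lam\<in>closed_simplex m.
       mutual_info m P lam = capacity m P \<and> Q = output_dist m P lam)"

end

theory Submission
  imports Defs "HOL-Real_Asymp.Real_Asymp"
begin

text \<open>
  Since D(T||R) - D(T||Q) is affine in T, it is constant on the affine hull of any points from
  which both Q and R are equidistant. This gives a Pythagorean identity on that hull and the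
  uniqueness of equidistant points, and it identifies the I-projection of Q^0 onto L(P^2, P^3) as
  the point Q^1 of the edge [P^2, P^3] equidistant from P^2 and P^3, which exists by the
  intermediate value theorem. For Q^0 = sum_i lambda^0_i P^i the same identity gives
    D(Q^0||Q^1) + D(Q^1||Q^0) = lambda^0_1 (D(P^1||Q^1) - D(P^2||Q^1)),
  so lambda^0_1 < 0 forces D(P^1||Q^1) <= D(P^2||Q^1) = D(P^3||Q^1). As
  I(lambda) = sum_i lambda_i D(P^i||Q^1) - D(lambda Phi||Q^1), the input on the edge with output
  Q^1 attains the capacity D(P^2||Q^1), and Q^1 is the only optimal output.
  The equidistant point Q^0 itself is a minimiser of the negative entropy minus a suitable linear
  function on the plane of P^1, P^2, P^3 within the simplex.
\<close>

section \<open>Kullback-Leibler divergence\<close>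

definition neg_entropy :: "('b::finite \<Rightarrow> real) \<Rightarrow> real" where
  "neg_entropy Q = (\<Sum>j\<in>UNIV. Q j * ln (Q j))"

lemma KL_self [simp]: "KL Q Q = 0"
  unfolding KL_def by (intro sum.neutral) auto

lemma KL_eq_neg_entropy_minus:
  assumes "\<forall>j. 0 < Q j" "\<forall>j. 0 < R j"
  shows "KL Q R = neg_entropy Q - (\<Sum>j\<in>UNIV. Q j * ln (R j))"
  unfolding KL_def neg_entropy_def sum_subtractf[symmetric]
  using assms by (intro sum.cong) (auto simp: ln_div right_diff_distrib less_imp_neq[symmetric])

lemma mult_ln_div_ge:
  fixes x y :: real
  assumes "0 < x" "0 < y"
  shows "x - y \<le> x * ln (x / y)"
    and "x \<noteq> y \<Longrightarrow> x - y < x * ln (x / y)"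
proof -
  have "x * ln (x / y) = - (x * (ln y - ln x))"
    using assms by (simp add: ln_div algebra_simps)
  moreover have "x * (ln y - ln x) \<le> y - x"
    using ln_diff_le[OF assms(2,1)] assms by (simp add: field_simps)
  moreover have "x \<noteq> y \<Longrightarrow> x * (ln y - ln x) < y - x"
    using ln_diff_less[OF assms(2,1)] assms by (simp add: field_simps)
  ultimately show "x - y \<le> x * ln (x / y)" "x \<noteq> y \<Longrightarrow> x - y < x * ln (x / y)"
    by linarith+
qed

lemma KL_nonneg:
  assumes "Q \<in> open_simplex" "R \<in> open_simplex"
  shows "0 \<le> KL Q R"
proof -
  have "0 = (\<Sum>j\<in>UNIV. Q j - R j)"
    using assms by (simp add: open_simplex_def sum_subtractf)
  also have "\<dots> \<le> KL Q R"
    unfolding KL_def using assms by (intro sum_mono mult_ln_div_ge) (auto simp: open_simplex_def)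
  finally show ?thesis .
qed

lemma KL_pos:
  assumes "Q \<in> open_simplex" "R \<in> open_simplex" "Q \<noteq> R"
  shows "0 < KL Q R"
proof -
  obtain j0 where "Q j0 \<noteq> R j0"
    using assms(3) by auto
  have "0 = (\<Sum>j\<in>UNIV. Q j - R j)"
    using assms by (simp add: open_simplex_def sum_subtractf)
  also have "\<dots> < KL Q R"
    unfolding KL_def using assms \<open>Q j0 \<noteq> R j0\<close>
    by (intro sum_strict_mono_ex1 bexI[of _ j0] ballI mult_ln_div_ge) (auto simp: open_simplex_def)
  finally show ?thesis .
qed

corollary KL_le_0_imp_eq:
  assumes "Q \<in> open_simplex" "R \<in> open_simplex" "KL Q R \<le> 0"
  shows "Q = R"
  using KL_pos[OF assms(1,2)] assms(3) by force

lemma KL_diff_affine: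
  fixes S :: "'i \<Rightarrow> 'b::finite \<Rightarrow> real"
  assumes "finite I" "\<forall>i\<in>I. \<forall>j. 0 < S i j" "\<forall>j. 0 < (\<Sum>i\<in>I. c i * S i j)"
    and "\<forall>j. 0 < Q j" "\<forall>j. 0 < R j"
  shows "KL (\<lambda>j. \<Sum>i\<in>I. c i * S i j) R - KL (\<lambda>j. \<Sum>i\<in>I. c i * S i j) Q
       = (\<Sum>i\<in>I. c i * (KL (S i) R - KL (S i) Q))"
proof -
  have "KL (\<lambda>j. \<Sum>i\<in>I. c i * S i j) R - KL (\<lambda>j. \<Sum>i\<in>I. c i * S i j) Q
      = (\<Sum>j\<in>UNIV. (\<Sum>i\<in>I. c i * S i j) * (ln (Q j) - ln (R j)))"
    using assms(3-5) by (simp add: KL_eq_neg_entropy_minus algebra_simps sum_subtractf)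
  also have "\<dots> = (\<Sum>i\<in>I. c i * (\<Sum>j\<in>UNIV. S i j * (ln (Q j) - ln (R j))))"
    by (simp add: sum_distrib_left sum_distrib_right mult.assoc sum.swap[of _ UNIV])
  also have "\<dots> = (\<Sum>i\<in>I. c i * (KL (S i) R - KL (S i) Q))"
    using assms(2,4,5)
    by (intro sum.cong refl) (simp add: KL_eq_neg_entropy_minus algebra_simps sum_subtractf)
  finally show ?thesis .
qed

section \<open>Equidistant points and I-projections\<close>

definition equidistant_from :: "('b::finite \<Rightarrow> real) list \<Rightarrow> ('b \<Rightarrow> real) \<Rightarrow> bool" where
  "equidistant_from Ss Q \<longleftrightarrow> (\<forall>S\<in>set Ss. \<forall>S'\<in>set Ss. KL S Q = KL S' Q)"

lemma affL_subset_open_simplex: "affL Ss \<subseteq> open_simplex"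
  by (auto simp: affL_def)

lemma affL_Nil [simp]: "affL [] = {}"
  by (simp add: affL_def)

lemma KL_diff_equidistant:
  assumes T: "T \<in> affL Ss" and Ss: "\<forall>S\<in>set Ss. \<forall>j. 0 < S j"
    and Q: "\<forall>j. 0 < Q j" and R: "\<forall>j. 0 < R j"
    and eqQ: "equidistant_from Ss Q" and eqR: "equidistant_from Ss R" and S: "S \<in> set Ss"
  shows "KL T R - KL T Q = KL S R - KL S Q"
proof -
  obtain mu where mu: "(\<Sum>i<length Ss. mu i) = 1" "T = (\<lambda>j. \<Sum>i<length Ss. mu i * (Ss ! i) j)"
    using T by (auto simp: affL_def fun_eq_iff)
  have T_pos: "\<forall>j. 0 < T j"
    using T affL_subset_open_simplex by (auto simp: open_simplex_def)
  have Ss_pos: "\<forall>i\<in>{..<length Ss}. \<forall>j. 0 < (Ss ! i) j"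
    using Ss nth_mem by blast
  have "KL T R - KL T Q = (\<Sum>i<length Ss. mu i * (KL (Ss ! i) R - KL (Ss ! i) Q))"
    unfolding mu(2) by (rule KL_diff_affine[OF _ Ss_pos _ Q R]) (use T_pos in \<open>simp_all add: mu(2)\<close>)
  also have "\<dots> = (\<Sum>i<length Ss. mu i * (KL S R - KL S Q))"
  proof (intro sum.cong refl)
    fix i assume "i \<in> {..<length Ss}"
    then have "Ss ! i \<in> set Ss"
      by simp
    then have "KL (Ss ! i) R = KL S R" "KL (Ss ! i) Q = KL S Q"
      using eqQ eqR S unfolding equidistant_from_def by blast+
    then show "mu i * (KL (Ss ! i) R - KL (Ss ! i) Q) = mu i * (KL S R - KL S Q)"
      by simp
  qed
  also have "\<dots> = KL S R - KL S Q"
    using mu(1) by (simp add: sum_distrib_right[symmetric])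
  finally show ?thesis .
qed

lemma KL_pythagoras_equidistant:
  assumes R: "R \<in> affL Ss" and Q: "Q \<in> affL Ss" and Ss: "\<forall>S\<in>set Ss. \<forall>j. 0 < S j"
    and Q0: "\<forall>j. 0 < Q0 j" and eqQ0: "equidistant_from Ss Q0" and eqQ: "equidistant_from Ss Q"
  shows "KL R Q0 = KL R Q + KL Q Q0"
proof -
  obtain S where S: "S \<in> set Ss"
    using R by (cases Ss) auto
  have Q_pos: "\<forall>j. 0 < Q j"
    using Q affL_subset_open_simplex by (auto simp: open_simplex_def)
  have "KL R Q0 - KL R Q = KL S Q0 - KL S Q"
    by (rule KL_diff_equidistant[OF R Ss Q_pos Q0 eqQ eqQ0 S])
  moreover have "KL Q Q0 - KL Q Q = KL S Q0 - KL S Q"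
    by (rule KL_diff_equidistant[OF Q Ss Q_pos Q0 eqQ eqQ0 S])
  ultimately show ?thesis by simp
qed

lemma Iproj_eq_equidistant_point:
  assumes Q: "Q \<in> affL Ss" and Ss: "\<forall>S\<in>set Ss. \<forall>j. 0 < S j"
    and Q0: "\<forall>j. 0 < Q0 j" and eqQ0: "equidistant_from Ss Q0" and eqQ: "equidistant_from Ss Q"
  shows "Iproj Q0 (affL Ss) = Q"
  unfolding Iproj_def
proof (rule the_equality)
  have "KL Q Q0 \<le> KL R Q0" if "R \<in> affL Ss" for R
    using KL_pythagoras_equidistant[OF that Q Ss Q0 eqQ0 eqQ] KL_nonneg[of R Q]
      that Q affL_subset_open_simplex by auto
  then show "Q \<in> affL Ss \<and> (\<forall>R\<in>affL Ss. KL Q Q0 \<le> KL R Q0)"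
    using Q by blast
next
  fix R assume R: "R \<in> affL Ss \<and> (\<forall>R'\<in>affL Ss. KL R Q0 \<le> KL R' Q0)"
  then have "KL R Q \<le> 0"
    using KL_pythagoras_equidistant[OF _ Q Ss Q0 eqQ0 eqQ, of R] Q by auto
  then show "R = Q"
    using R Q affL_subset_open_simplex by (auto intro: KL_le_0_imp_eq)
qed

lemma equidistant_point_unique:
  assumes Q: "Q \<in> affL Ss" and R: "R \<in> affL Ss" and Ss: "\<forall>S\<in>set Ss. \<forall>j. 0 < S j"
    and eqQ: "equidistant_from Ss Q" and eqR: "equidistant_from Ss R"
  shows "Q = R"
proof -
  have in_simplex: "Q \<in> open_simplex" "R \<in> open_simplex"
    using Q R affL_subset_open_simplex by auto
  then have "KL R R = KL R Q + KL Q R"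
    by (intro KL_pythagoras_equidistant[OF R Q Ss _ eqR eqQ]) (auto simp: open_simplex_def)
  then have "KL Q R \<le> 0"
    using KL_nonneg[OF in_simplex(2,1)] by simp
  then show ?thesis
    using KL_le_0_imp_eq in_simplex by blast
qed

lemma set_rows: "set (rows m P) = P ` {1..m}"
  by (auto simp: rows_def)

lemma equidistant_from_rows_iff:
  "equidistant_from (rows m P) Q \<longleftrightarrow> (\<forall>i\<in>{1..m}. \<forall>k\<in>{1..m}. KL (P i) Q = KL (P k) Q)"
  by (simp add: equidistant_from_def set_rows)

lemma rows_nth: "i < m \<Longrightarrow> rows m P ! i = P (Suc i)"
  by (simp add: rows_def del: upt_Suc)

lemma length_rows [simp]: "length (rows m P) = m"
  by (simp add: rows_def)

lemma output_dist_in_affL_rows: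
  assumes "output_dist m P lam \<in> open_simplex" "(\<Sum>i=1..m. lam i) = 1"
  shows "output_dist m P lam \<in> affL (rows m P)"
proof -
  have "(\<Sum>i<m. lam (Suc i)) = 1"
    "\<forall>j. output_dist m P lam j = (\<Sum>i<m. lam (Suc i) * (rows m P ! i) j)"
    using assms(2) by (simp_all add: output_dist_def sum.atLeast1_atMost_eq rows_nth)
  then show ?thesis
    using assms(1) unfolding affL_def by auto
qed

lemma equidistant_eqI:
  assumes rows: "\<forall>i\<in>{1..m}. P i \<in> open_simplex"
    and Q: "Q \<in> affL (rows m P)" and eqQ: "equidistant_from (rows m P) Q"
  shows "equidistant m P = Q"
  unfolding equidistant_def equidistant_from_rows_iff[symmetric]
proof (rule the_equality)
  show "Q \<in> affL (rows m P) \<and> equidistant_from (rows m P) Q"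
    using Q eqQ ..
next
  have rows_pos: "\<forall>S\<in>set (rows m P). \<forall>j. 0 < S j"
    using rows by (auto simp: set_rows open_simplex_def)
  fix R assume "R \<in> affL (rows m P) \<and> equidistant_from (rows m P) R"
  then show "R = Q"
    using equidistant_point_unique[OF _ Q rows_pos _ eqQ] by blast
qed

lemma barycentric_eqI:
  assumes gp: "general_position m P" and lam_sum: "(\<Sum>i=1..m. lam i) = 1"
    and lam_supp: "\<forall>i. i \<notin> {1..m} \<longrightarrow> lam i = 0"
  shows "barycentric m P (output_dist m P lam) = lam"
  unfolding barycentric_def
proof (rule the_equality)
  show "(\<Sum>i=1..m. lam i) = 1 \<and> (\<forall>i. i \<notin> {1..m} \<longrightarrow> lam i = 0)
      \<and> (\<forall>j. output_dist m P lam j = (\<Sum>i=1..m. lam i * P i j))"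
    using lam_sum lam_supp by (simp add: output_dist_def)
next
  fix mu assume mu: "(\<Sum>i=1..m. mu i) = 1 \<and> (\<forall>i. i \<notin> {1..m} \<longrightarrow> mu i = 0)
      \<and> (\<forall>j. output_dist m P lam j = (\<Sum>i=1..m. mu i * P i j))"
  define c where "c i = mu i - lam i" for i
  have "1 \<le> m"
    using lam_sum by (cases m) auto
  then have sum_split: "(\<Sum>i=1..m. f i) = f 1 + (\<Sum>i=2..m. f i)" for f :: "nat \<Rightarrow> real"
    by (simp add: sum.atLeast_Suc_atMost numeral_2_eq_2)
  have "(\<Sum>i=1..m. c i) = 0"
    using mu lam_sum by (simp add: c_def sum_subtractf)
  then have c1: "c 1 = - (\<Sum>i=2..m. c i)"
    using sum_split[of c] by simp
  have "(\<Sum>i=1..m. c i * P i j) = 0" for j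
    using mu by (simp add: c_def left_diff_distrib sum_subtractf output_dist_def)
  then have "(\<Sum>i=2..m. c i * (P i j - P 1 j)) = 0" for j
    using sum_split[of "\<lambda>i. c i * P i j"] c1
    by (simp add: right_diff_distrib sum_subtractf sum_distrib_right[symmetric])
  then have c_rest: "\<forall>i\<in>{2..m}. c i = 0"
    using gp unfolding general_position_def by blast
  then have "c 1 = 0"
    using c1 by simp
  have "c i = 0" for i
  proof (cases "i \<in> {1..m}")
    case True
    then show ?thesis
      using c_rest \<open>c 1 = 0\<close> by (cases "i = 1") auto
  next
    case False
    then show ?thesis
      using mu lam_supp by (simp add: c_def)
  qed
  then show "mu = lam"
    by (simp add: c_def fun_eq_iff)
qed

section \<open>Channel capacity\<close>

lemma output_dist_in_open_simplex:
  assumes rows: "\<forall>i\<in>{1..m}. P i \<in> open_simplex" and lam: "lam \<in> closed_simplex m"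
  shows "output_dist m P lam \<in> open_simplex"
proof -
  have lam_nonneg: "\<forall>i\<in>{1..m}. 0 \<le> lam i" and lam_sum: "(\<Sum>i=1..m. lam i) = 1"
    using lam by (auto simp: closed_simplex_def)
  obtain k where k: "k \<in> {1..m}" "0 < lam k"
  proof (rule ccontr)
    assume "\<not> thesis"
    then have "(\<Sum>i=1..m. lam i) \<le> 0"
      by (intro sum_nonpos) (meson not_less that)
    then show False
      using lam_sum by simp
  qed
  have "0 < output_dist m P lam j" for j
    unfolding output_dist_def
    using k rows lam_nonneg
    by (intro sum_pos2[of _ k]) (auto simp: open_simplex_def less_imp_le intro!: mult_nonneg_nonneg)
  moreover have "(\<Sum>j\<in>UNIV. output_dist m P lam j) = (\<Sum>i=1..m. lam i * (\<Sum>j\<in>UNIV. P i j))"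
    by (simp add: output_dist_def sum.swap[of _ UNIV] sum_distrib_left)
  moreover have "(\<Sum>i=1..m. lam i * (\<Sum>j\<in>UNIV. P i j)) = 1"
    using rows lam_sum by (simp add: open_simplex_def)
  ultimately show ?thesis
    by (simp add: open_simplex_def)
qed

lemma mutual_info_eq_KL:
  assumes rows: "\<forall>i\<in>{1..m}. P i \<in> open_simplex" and lam: "lam \<in> closed_simplex m"
    and R: "\<forall>j. 0 < R j"
  shows "mutual_info m P lam = (\<Sum>i=1..m. lam i * KL (P i) R) - KL (output_dist m P lam) R"
proof -
  let ?Q = "output_dist m P lam"
  have Q: "\<forall>j. 0 < ?Q j"
    using output_dist_in_open_simplex[OF rows lam] by (simp add: open_simplex_def)
  have "mutual_info m P lam = (\<Sum>i=1..m. lam i * KL (P i) ?Q)"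
    by (simp add: mutual_info_def KL_def sum_distrib_left mult.assoc)
  moreover have "KL ?Q R - KL ?Q ?Q = (\<Sum>i=1..m. lam i * (KL (P i) R - KL (P i) ?Q))"
    unfolding output_dist_def
    using rows Q R by (intro KL_diff_affine) (auto simp: open_simplex_def output_dist_def)
  ultimately show ?thesis
    by (simp add: right_diff_distrib sum_subtractf)
qed

lemma mutual_info_le:
  assumes rows: "\<forall>i\<in>{1..m}. P i \<in> open_simplex" and lam: "lam \<in> closed_simplex m"
    and R: "\<forall>j. 0 < R j" and bound: "\<forall>i\<in>{1..m}. KL (P i) R \<le> C"
  shows "mutual_info m P lam \<le> C - KL (output_dist m P lam) R"
proof -
  have "(\<Sum>i=1..m. lam i * KL (P i) R) \<le> (\<Sum>i=1..m. lam i * C)"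
    using lam bound by (intro sum_mono mult_left_mono) (auto simp: closed_simplex_def)
  also have "\<dots> = C"
    using lam by (simp add: closed_simplex_def sum_distrib_right[symmetric])
  finally show ?thesis
    using mutual_info_eq_KL[OF rows lam R] by simp
qed

lemma capacity_eqI:
  assumes rows: "\<forall>i\<in>{1..m}. P i \<in> open_simplex" and lam: "lam \<in> closed_simplex m"
    and bound: "\<forall>i\<in>{1..m}. KL (P i) (output_dist m P lam) \<le> C"
    and tight: "\<forall>i\<in>{1..m}. lam i \<noteq> 0 \<longrightarrow> KL (P i) (output_dist m P lam) = C"
  shows "capacity m P = C \<and> capacity_output m P = output_dist m P lam"
proof -
  let ?R = "output_dist m P lam"
  have R: "?R \<in> open_simplex"
    by (rule output_dist_in_open_simplex[OF rows lam])
  then have R_pos: "\<forall>j. 0 < ?R j"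
    by (simp add: open_simplex_def)
  have mi_le: "mutual_info m P mu \<le> C - KL (output_dist m P mu) ?R" if "mu \<in> closed_simplex m" for mu
    using mutual_info_le[OF rows that R_pos bound] .
  have mi_lam: "mutual_info m P lam = C"
  proof -
    have "(\<Sum>i=1..m. lam i * KL (P i) ?R) = (\<Sum>i=1..m. lam i * C)"
      using tight by (intro sum.cong refl) (metis mult_zero_left)
    then show ?thesis
      using mutual_info_eq_KL[OF rows lam R_pos] lam
      by (simp add: closed_simplex_def sum_distrib_right[symmetric])
  qed
  have cap: "capacity m P = C"
    unfolding capacity_def
  proof (rule cSup_eq_maximum)
    show "C \<in> mutual_info m P ` closed_simplex m"
      using lam mi_lam by (metis image_eqI)
    show "x \<le> C" if "x \<in> mutual_info m P ` closed_simplex m" for x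
      using that mi_le KL_nonneg[OF output_dist_in_open_simplex[OF rows] R] by fastforce
  qed
  have "capacity_output m P = ?R"
    unfolding capacity_output_def
  proof (rule the_equality)
    show "\<exists>mu\<in>closed_simplex m. mutual_info m P mu = capacity m P \<and> ?R = output_dist m P mu"
      using lam mi_lam cap by auto
    fix Q assume "\<exists>mu\<in>closed_simplex m. mutual_info m P mu = capacity m P \<and> Q = output_dist m P mu"
    then obtain mu where mu: "mu \<in> closed_simplex m" "mutual_info m P mu = C" "Q = output_dist m P mu"
      using cap by auto
    then show "Q = ?R"
      using mi_le[OF mu(1)] KL_le_0_imp_eq[OF output_dist_in_open_simplex[OF rows mu(1)] R] by simp
  qed
  with cap show ?thesis ..
qed

section \<open>Negative entropy on a plane of distributions\<close>

lemma continuous_on_xlnx: "continuous_on {0..} (\<lambda>x::real. x * ln x)"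
proof -
  have "continuous (at x within {0..}) (\<lambda>x::real. x * ln x)" if "0 \<le> x" for x
  proof (cases "x = 0")
    case True
    \<comment> \<open>\<open>ln 0 = 0\<close> in HOL, so \<open>x * ln x\<close> already takes its limit value at 0.\<close>
    have "((\<lambda>x::real. x * ln x) \<longlongrightarrow> 0) (at_right 0)"
      by real_asymp
    then show ?thesis
      using True by (simp add: continuous_within at_within_Ici_at_right)
  next
    case False
    with that have "continuous (at x) (\<lambda>x::real. x * ln x)"
      by (intro continuous_intros) auto
    then show ?thesis
      by (rule continuous_at_imp_continuous_at_within)
  qed
  then show ?thesis
    by (simp add: continuous_on_eq_continuous_within)
qed

lemma xlnx_ge_tangent:
  fixes x w :: real
  assumes "0 \<le> x" "0 < w"
  shows "x * ln w + (x - w) \<le> x * ln x"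
proof (cases "x = 0")
  case False
  with assms have "0 < x"
    by simp
  then have "x * (ln w - ln x) \<le> w - x"
    using ln_diff_le[OF assms(2) \<open>0 < x\<close>] by (simp add: field_simps)
  then show ?thesis
    by (simp add: algebra_simps)
qed (use assms in simp)

lemma xlnx_convex:
  fixes u p e :: real
  assumes u: "0 \<le> u" and p: "0 < p" and e: "0 \<le> e" "e \<le> 1"
  shows "((1 - e) * u + e * p) * ln ((1 - e) * u + e * p) \<le> (1 - e) * (u * ln u) + e * (p * ln p)"
proof (cases "e = 0")
  case False
  define w where "w = (1 - e) * u + e * p"
  have "0 < w"
    unfolding w_def using u p e False by (intro add_nonneg_pos) auto
  have "(1 - e) * (u * ln w + (u - w)) \<le> (1 - e) * (u * ln u)"
    using xlnx_ge_tangent[OF u \<open>0 < w\<close>] e by (intro mult_left_mono) auto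
  moreover have "e * (p * ln w + (p - w)) \<le> e * (p * ln p)"
    using xlnx_ge_tangent[OF less_imp_le[OF p] \<open>0 < w\<close>] e by (intro mult_left_mono) auto
  moreover have "(1 - e) * (u * ln w + (u - w)) + e * (p * ln w + (p - w)) = w * ln w"
    by (simp add: w_def algebra_simps)
  ultimately show ?thesis
    unfolding w_def by linarith
qed simp

lemma neg_entropy_steep_at_boundary:
  fixes q p :: "'b::finite \<Rightarrow> real"
  assumes q: "\<forall>j. 0 \<le> q j" and j0: "q j0 = 0" and p: "\<forall>j. 0 < p j"
  obtains e where "0 < e" "e \<le> 1" "neg_entropy (\<lambda>j. (1 - e) * q j + e * p j) + e * K < neg_entropy q"
proof -
  \<comment> \<open>Coordinate \<open>j0\<close> contributes \<open>e * p j0 * ln e\<close>, which beats the \<open>O(e)\<close> remainder for small \<open>e\<close>.\<close>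
  define c where "c = (\<Sum>j\<in>UNIV. p j * ln (p j) - q j * ln (q j)) + K"
  define e where "e = exp (- (\<bar>c\<bar> + 1) / p j0)"
  have p0: "0 < p j0"
    using p by simp
  have e: "0 < e" "e \<le> 1"
    using p0 by (auto simp: e_def divide_nonpos_pos)
  have ln_e: "p j0 * ln e = - (\<bar>c\<bar> + 1)"
    using p0 by (simp add: e_def)
  define r where "r j = (1 - e) * q j + e * p j" for j
  define b where "b j = e * (p j * ln (p j) - q j * ln (q j))" for j
  have le_b: "r j * ln (r j) - q j * ln (q j) \<le> b j" for j
    using xlnx_convex[of "q j" "p j" e] q p e unfolding r_def b_def by (simp add: algebra_simps)
  have at_j0: "r j0 * ln (r j0) - q j0 * ln (q j0) = b j0 + e * (p j0 * ln e)"
    using j0 e p0 by (simp add: r_def b_def ln_mult algebra_simps)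
  have "neg_entropy r - neg_entropy q = (\<Sum>j\<in>UNIV. r j * ln (r j) - q j * ln (q j))"
    by (simp add: neg_entropy_def sum_subtractf)
  also have "\<dots> = (r j0 * ln (r j0) - q j0 * ln (q j0))
      + (\<Sum>j\<in>UNIV - {j0}. r j * ln (r j) - q j * ln (q j))"
    by (simp add: sum.remove)
  also have "\<dots> \<le> b j0 + e * (p j0 * ln e) + (\<Sum>j\<in>UNIV - {j0}. b j)"
    unfolding at_j0 by (intro add_left_mono sum_mono le_b)
  also have "\<dots> = (\<Sum>j\<in>UNIV. b j) + e * (p j0 * ln e)"
    by (simp add: sum.remove[of UNIV j0 b])
  also have "(\<Sum>j\<in>UNIV. b j) = e * (c - K)"
    by (simp add: b_def c_def sum_distrib_left)
  finally have "neg_entropy r + e * K - neg_entropy q \<le> e * (c - \<bar>c\<bar> - 1)"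
    unfolding ln_e by (simp add: algebra_simps)
  also have "\<dots> < 0"
    using e by (intro mult_pos_neg) auto
  finally show thesis
    using that e unfolding r_def by simp
qed

lemma neg_entropy_stationary:
  fixes q v :: "'b::finite \<Rightarrow> real"
  assumes q: "\<forall>j. 0 < q j" and v: "sum v UNIV = 0"
    and min: "\<And>s. \<forall>j. 0 < q j + s * v j \<Longrightarrow> neg_entropy q \<le> neg_entropy (\<lambda>j. q j + s * v j) - a * s"
  shows "(\<Sum>j\<in>UNIV. v j * ln (q j)) = a"
proof -
  define g where "g s = neg_entropy (\<lambda>j. q j + s * v j) - a * s" for s
  have deriv: "(g has_real_derivative (\<Sum>j\<in>UNIV. v j * ln (q j)) + sum v UNIV - a) (at 0)"
    unfolding g_def neg_entropy_def using q
    by (auto intro!: derivative_eq_intros simp: sum.distrib field_simps less_imp_neq[symmetric])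
  have open_set: "open {s. \<forall>j. 0 < q j + s * v j}"
  proof -
    have "{s. \<forall>j. 0 < q j + s * v j} = (\<Inter>j. {s. 0 < q j + s * v j})"
      by auto
    then show ?thesis
      by (simp add: open_Collect_less continuous_intros)
  qed
  moreover have "0 \<in> {s. \<forall>j. 0 < q j + s * v j}"
    using q by simp
  ultimately obtain d where d: "0 < d" "ball 0 d \<subseteq> {s. \<forall>j. 0 < q j + s * v j}"
    by (meson open_contains_ball_eq)
  have "\<forall>y. \<bar>0 - y\<bar> < d \<longrightarrow> g 0 \<le> g y"
  proof (intro allI impI)
    fix y :: real assume "\<bar>0 - y\<bar> < d"
    then have "\<forall>j. 0 < q j + y * v j"
      using d(2) by (auto simp: dist_real_def)
    then show "g 0 \<le> g y"
      using min by (simp add: g_def)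
  qed
  then have "(\<Sum>j\<in>UNIV. v j * ln (q j)) + sum v UNIV - a = 0"
    using DERIV_local_min[OF deriv d(1)] by blast
  then show ?thesis
    using v by simp
qed

lemma exists_nonzero_minor:
  fixes u v :: "'b \<Rightarrow> real"
  assumes indep: "\<forall>x y. (\<forall>j. x * u j + y * v j = 0) \<longrightarrow> x = 0 \<and> y = 0"
  obtains j k where "u j * v k - u k * v j \<noteq> 0"
proof (rule ccontr)
  assume no_minor: "\<not> thesis"
  have minors: "u j * v k = u k * v j" for j k
  proof (rule ccontr)
    assume "u j * v k \<noteq> u k * v j"
    then show False
      using that no_minor by simp
  qed
  show False
  proof (cases "\<forall>j. u j = 0")
    case True
    then show False
      using indep[rule_format, of 1 0] by simp
  next
    case False
    then obtain j0 where "u j0 \<noteq> 0"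
      by blast
    moreover have "\<forall>k. v j0 * u k + (- u j0) * v k = 0"
      using minors by (simp add: mult.commute)
    ultimately show False
      using indep[rule_format, of "v j0" "- u j0"] by simp
  qed
qed

lemma cramer_abs_le:
  fixes x y a b c d :: real
  assumes "\<bar>x * a + y * b\<bar> \<le> 1" "\<bar>x * c + y * d\<bar> \<le> 1"
  shows "\<bar>x\<bar> * \<bar>a * d - c * b\<bar> \<le> \<bar>b\<bar> + \<bar>d\<bar>"
    and "\<bar>y\<bar> * \<bar>a * d - c * b\<bar> \<le> \<bar>a\<bar> + \<bar>c\<bar>"
proof -
  have "x * (a * d - c * b) = (x * a + y * b) * d - (x * c + y * d) * b"
    "y * (a * d - c * b) = a * (x * c + y * d) - c * (x * a + y * b)"
    by (simp_all add: algebra_simps)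
  moreover have "\<bar>(x * a + y * b) * d\<bar> \<le> \<bar>d\<bar>" "\<bar>(x * c + y * d) * b\<bar> \<le> \<bar>b\<bar>"
    "\<bar>a * (x * c + y * d)\<bar> \<le> \<bar>a\<bar>" "\<bar>c * (x * a + y * b)\<bar> \<le> \<bar>c\<bar>"
    using assms by (simp_all add: abs_mult mult_left_le_one_le mult_right_le_one_le)
  ultimately show "\<bar>x\<bar> * \<bar>a * d - c * b\<bar> \<le> \<bar>b\<bar> + \<bar>d\<bar>"
    and "\<bar>y\<bar> * \<bar>a * d - c * b\<bar> \<le> \<bar>a\<bar> + \<bar>c\<bar>"
    by (simp_all add: abs_mult[symmetric] abs_triangle_ineq4[THEN order_trans])
qed

lemma compact_nonneg_plane:
  fixes A u v :: "'b::finite \<Rightarrow> real"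
  assumes A: "A \<in> open_simplex" and u: "sum u UNIV = 0" and v: "sum v UNIV = 0"
    and indep: "\<forall>x y. (\<forall>j. x * u j + y * v j = 0) \<longrightarrow> x = 0 \<and> y = 0"
  shows "compact {z :: real \<times> real. \<forall>j. 0 \<le> A j + fst z * u j + snd z * v j}"
    (is "compact ?K")
proof -
  obtain j k where D: "u j * v k - u k * v j \<noteq> 0"
    using exists_nonzero_minor[OF indep] by blast
  define M where "M = (\<bar>u j\<bar> + \<bar>u k\<bar> + \<bar>v j\<bar> + \<bar>v k\<bar>) / \<bar>u j * v k - u k * v j\<bar>"
  have coord_le: "\<bar>fst z * u i + snd z * v i\<bar> \<le> 1" if "z \<in> ?K" for z i
  proof -
    let ?q = "\<lambda>j. A j + fst z * u j + snd z * v j"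
    have "sum ?q UNIV = 1"
      using A u v by (simp add: open_simplex_def sum.distrib sum_distrib_left[symmetric])
    then have "?q i \<le> 1"
      using that member_le_sum[of i UNIV ?q] by simp
    moreover have "A i \<le> 1" "0 < A i"
      using A member_le_sum[of i UNIV A] by (auto simp: open_simplex_def less_imp_le)
    ultimately show ?thesis
      using that by (simp add: abs_le_iff) (smt (verit))
  qed
  have bound: "\<bar>fst z\<bar> \<le> M \<and> \<bar>snd z\<bar> \<le> M" if "z \<in> ?K" for z
    using cramer_abs_le[OF coord_le[OF that, of j] coord_le[OF that, of k]] D
    by (simp add: M_def pos_le_divide_eq) (smt (verit) abs_ge_zero)
  have "?K \<subseteq> {-M..M} \<times> {-M..M}"
  proof
    fix z assume "z \<in> ?K"
    then show "z \<in> {-M..M} \<times> {-M..M}"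
      using bound[of z] by (cases z) (simp add: abs_le_iff)
  qed
  moreover have "closed ?K"
    by (intro closed_Collect_all closed_Collect_le continuous_intros)
  ultimately show ?thesis
    using compact_Int_closed[OF compact_Times[OF compact_Icc compact_Icc], of ?K "-M" M "-M" M]
    by (simp add: Int_absorb1)
qed

corollary neg_entropy_minimiser_pos:
  fixes q p :: "'b::finite \<Rightarrow> real"
  assumes q: "\<forall>j. 0 \<le> q j" and p: "\<forall>j. 0 < p j"
    and min: "\<And>e. 0 < e \<Longrightarrow> e \<le> 1 \<Longrightarrow> neg_entropy q \<le> neg_entropy (\<lambda>j. (1 - e) * q j + e * p j) + e * K"
  shows "0 < q j"
proof (rule ccontr)
  assume "\<not> 0 < q j"
  moreover have "0 \<le> q j"
    using q by blast
  ultimately have "q j = 0"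
    by linarith
  then obtain e where "0 < e" "e \<le> 1" "neg_entropy (\<lambda>j. (1 - e) * q j + e * p j) + e * K < neg_entropy q"
    by (rule neg_entropy_steep_at_boundary[OF q _ p])
  with min show False
    by fastforce
qed

lemma continuous_on_neg_entropy_plane:
  "continuous_on {z. \<forall>j. 0 \<le> A j + fst z * u j + snd z * v j}
     (\<lambda>z. neg_entropy (\<lambda>j. A j + fst z * u j + snd z * v j))"
  unfolding neg_entropy_def
  by (intro continuous_on_sum continuous_on_compose2[OF continuous_on_xlnx]) (auto intro!: continuous_intros)

text \<open>
  The point is a minimiser of \<open>neg_entropy (A + x u + y v) - a x - b y\<close> over the compact set
  where \<open>A + x u + y v\<close> is nonnegative: it is interior because \<open>x ln x\<close> has infinite slope at 0,
  and stationarity in \<open>x\<close> and \<open>y\<close> gives the two equations.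
\<close>

lemma log_moments_attained:
  fixes A u v :: "'b::finite \<Rightarrow> real"
  assumes A: "A \<in> open_simplex" and u: "sum u UNIV = 0" and v: "sum v UNIV = 0"
    and indep: "\<forall>x y. (\<forall>j. x * u j + y * v j = 0) \<longrightarrow> x = 0 \<and> y = 0"
  obtains x y where "\<forall>j. 0 < A j + x * u j + y * v j"
    "(\<Sum>j\<in>UNIV. u j * ln (A j + x * u j + y * v j)) = a"
    "(\<Sum>j\<in>UNIV. v j * ln (A j + x * u j + y * v j)) = b"
proof -
  define q where "q z j = A j + fst z * u j + snd z * v j" for z :: "real \<times> real" and j
  define K where "K = {z. \<forall>j. 0 \<le> q z j}"
  define \<Phi> where "\<Phi> z = neg_entropy (q z) - a * fst z - b * snd z" for z
  have A_pos: "\<forall>j. 0 < A j"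
    using A by (simp add: open_simplex_def)
  have "(0, 0) \<in> K"
    using A_pos by (simp add: K_def q_def less_imp_le)
  moreover have "compact K"
    unfolding K_def q_def by (rule compact_nonneg_plane[OF A u v indep])
  moreover have "continuous_on K \<Phi>"
    unfolding \<Phi>_def K_def q_def
    by (intro continuous_on_diff continuous_on_neg_entropy_plane continuous_intros)
  ultimately obtain z0 where z0: "z0 \<in> K" "\<And>z. z \<in> K \<Longrightarrow> \<Phi> z0 \<le> \<Phi> z"
    by (metis continuous_attains_inf empty_iff)
  have q0_pos: "\<forall>j. 0 < q z0 j"
  proof (intro allI, rule neg_entropy_minimiser_pos[OF _ A_pos, where K = "a * fst z0 + b * snd z0"])
    show "\<forall>j. 0 \<le> q z0 j"
      using z0(1) by (simp add: K_def)
    fix e :: real assume e: "0 < e" "e \<le> 1"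
    have q_e: "q ((1 - e) *\<^sub>R z0) = (\<lambda>j. (1 - e) * q z0 j + e * A j)"
      by (simp add: q_def fun_eq_iff algebra_simps)
    have "0 \<le> (1 - e) * q z0 j + e * A j" for j
      using z0(1) e A_pos by (intro add_nonneg_nonneg mult_nonneg_nonneg) (auto simp: K_def less_imp_le)
    then have "\<Phi> z0 \<le> \<Phi> ((1 - e) *\<^sub>R z0)"
      by (intro z0(2)) (simp add: K_def q_e)
    then show "neg_entropy (q z0) \<le> neg_entropy (\<lambda>j. (1 - e) * q z0 j + e * A j) + e * (a * fst z0 + b * snd z0)"
      unfolding \<Phi>_def q_e by (simp add: algebra_simps)
  qed
  have stationary: "(\<Sum>j\<in>UNIV. (fst d * u j + snd d * v j) * ln (q z0 j)) = a * fst d + b * snd d" for d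
  proof (rule neg_entropy_stationary[OF q0_pos])
    show "(\<Sum>j\<in>UNIV. fst d * u j + snd d * v j) = 0"
      using u v by (simp add: sum.distrib sum_distrib_left[symmetric])
    fix s assume pos: "\<forall>j. 0 < q z0 j + s * (fst d * u j + snd d * v j)"
    have q_s: "q (z0 + s *\<^sub>R d) = (\<lambda>j. q z0 j + s * (fst d * u j + snd d * v j))"
      by (simp add: q_def fun_eq_iff algebra_simps)
    have "\<Phi> z0 \<le> \<Phi> (z0 + s *\<^sub>R d)"
      using pos by (intro z0(2)) (simp add: K_def q_s less_imp_le)
    then show "neg_entropy (q z0) \<le> neg_entropy (\<lambda>j. q z0 j + s * (fst d * u j + snd d * v j))
        - (a * fst d + b * snd d) * s"
      unfolding \<Phi>_def q_s by (simp add: algebra_simps)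
  qed
  show thesis
    using that[of "fst z0" "snd z0"] q0_pos stationary[of "(1, 0)"] stationary[of "(0, 1)"]
    by (simp add: q_def)
qed

section \<open>Channels with three inputs\<close>

lemma sum_atLeast1_atMost_3: "(\<Sum>i=1..3. f i) = f (1::nat) + f 2 + f 3"
  by (simp add: numeral_3_eq_3 numeral_2_eq_2 add.assoc)

lemma rows_3: "rows 3 P = [P 1, P 2, P 3]"
  by (simp add: rows_def numeral_3_eq_3 numeral_2_eq_2 upt_rec)

lemma equidistant_from_pair_iff: "equidistant_from [A, B] Q \<longleftrightarrow> KL A Q = KL B Q"
  unfolding equidistant_from_def
proof
  have "A \<in> set [A, B]" "B \<in> set [A, B]"
    by simp_all
  then show "\<forall>S\<in>set [A, B]. \<forall>S'\<in>set [A, B]. KL S Q = KL S' Q \<Longrightarrow> KL A Q = KL B Q"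
    by blast
  show "KL A Q = KL B Q \<Longrightarrow> \<forall>S\<in>set [A, B]. \<forall>S'\<in>set [A, B]. KL S Q = KL S' Q"
    by simp
qed

lemma equidistant_from_rows_3_iff:
  "equidistant_from (rows 3 P) Q \<longleftrightarrow> KL (P 2) Q = KL (P 1) Q \<and> KL (P 3) Q = KL (P 1) Q"
  unfolding equidistant_from_def rows_3
proof
  have "P 1 \<in> set [P 1, P 2, P 3]" "P 2 \<in> set [P 1, P 2, P 3]" "P 3 \<in> set [P 1, P 2, P 3]"
    by simp_all
  then show "\<forall>S\<in>set [P 1, P 2, P 3]. \<forall>S'\<in>set [P 1, P 2, P 3]. KL S Q = KL S' Q
      \<Longrightarrow> KL (P 2) Q = KL (P 1) Q \<and> KL (P 3) Q = KL (P 1) Q"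
    by blast
  show "KL (P 2) Q = KL (P 1) Q \<and> KL (P 3) Q = KL (P 1) Q
      \<Longrightarrow> \<forall>S\<in>set [P 1, P 2, P 3]. \<forall>S'\<in>set [P 1, P 2, P 3]. KL S Q = KL S' Q"
    by simp
qed

lemma general_position_3_indep:
  assumes gp: "general_position 3 P"
  shows "\<forall>x y. (\<forall>j. x * (P 2 j - P 1 j) + y * (P 3 j - P 1 j) = 0) \<longrightarrow> x = 0 \<and> y = 0"
proof (intro allI impI)
  fix x y assume xy: "\<forall>j. x * (P 2 j - P 1 j) + y * (P 3 j - P 1 j) = 0"
  define c where "c i = (if i = 2 then x else y)" for i :: nat
  have "{2..3::nat} = {2, 3}"
    by auto
  then have "(\<Sum>i=2..3. c i * (P i j - P 1 j)) = x * (P 2 j - P 1 j) + y * (P 3 j - P 1 j)" for j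
    by (simp add: c_def)
  then have "(\<Sum>i=2..3. c i * (P i j - P 1 j)) = 0" for j
    using xy by simp
  then have "\<forall>i\<in>{2..3}. c i = 0"
    using gp unfolding general_position_def by blast
  then have "c 2 = 0" "c 3 = 0"
    by auto
  then show "x = 0 \<and> y = 0"
    by (simp add: c_def)
qed

lemma equidistant_point_exists:
  assumes rows: "\<forall>i\<in>{1..3}. P i \<in> open_simplex" and gp: "general_position 3 P"
  obtains lam where "(\<Sum>i=1..3. lam i) = 1" "\<forall>i. i \<notin> {1..3} \<longrightarrow> lam i = 0"
    "output_dist 3 P lam \<in> open_simplex" "equidistant_from (rows 3 P) (output_dist 3 P lam)"
proof -
  have P: "P 1 \<in> open_simplex" "P 2 \<in> open_simplex" "P 3 \<in> open_simplex"
    using rows by simp_all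
  define u where "u j = P 2 j - P 1 j" for j
  define v where "v j = P 3 j - P 1 j" for j
  have sum_uv: "sum u UNIV = 0" "sum v UNIV = 0"
    using P by (simp_all add: u_def v_def sum_subtractf open_simplex_def)
  have indep: "\<forall>x y. (\<forall>j. x * u j + y * v j = 0) \<longrightarrow> x = 0 \<and> y = 0"
    unfolding u_def v_def by (rule general_position_3_indep[OF gp])
  obtain x y where xy: "\<forall>j. 0 < P 1 j + x * u j + y * v j"
    "(\<Sum>j\<in>UNIV. u j * ln (P 1 j + x * u j + y * v j)) = neg_entropy (P 2) - neg_entropy (P 1)"
    "(\<Sum>j\<in>UNIV. v j * ln (P 1 j + x * u j + y * v j)) = neg_entropy (P 3) - neg_entropy (P 1)"
    using log_moments_attained[OF P(1) sum_uv indep] by blast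
  define lam where "lam i = (if i = 1 then 1 - x - y else if i = 2 then x else if i = 3 then y else 0)"
    for i :: nat
  define Q where "Q = output_dist 3 P lam"
  have Q: "Q = (\<lambda>j. P 1 j + x * u j + y * v j)"
    unfolding Q_def output_dist_def sum_atLeast1_atMost_3
    by (simp add: lam_def u_def v_def fun_eq_iff algebra_simps)
  have Q_pos: "\<forall>j. 0 < Q j"
    using xy(1) by (simp add: Q)
  have "sum Q UNIV = 1"
    using P(1) sum_uv by (simp add: Q sum.distrib sum_distrib_left[symmetric] open_simplex_def)
  with Q_pos have Q_simplex: "Q \<in> open_simplex"
    by (simp add: open_simplex_def)
  have KL_P: "KL (P i) Q = neg_entropy (P i) - (\<Sum>j\<in>UNIV. P i j * ln (Q j))" if "i \<in> {1..3}" for i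
    using rows that Q_pos by (intro KL_eq_neg_entropy_minus) (auto simp: open_simplex_def)
  have "KL (P 2) Q - KL (P 1) Q = neg_entropy (P 2) - neg_entropy (P 1) - (\<Sum>j\<in>UNIV. u j * ln (Q j))"
    using KL_P[of 1] KL_P[of 2] by (simp add: u_def left_diff_distrib sum_subtractf)
  moreover have "KL (P 3) Q - KL (P 1) Q = neg_entropy (P 3) - neg_entropy (P 1) - (\<Sum>j\<in>UNIV. v j * ln (Q j))"
    using KL_P[of 1] KL_P[of 3] by (simp add: v_def left_diff_distrib sum_subtractf)
  ultimately have "equidistant_from (rows 3 P) Q"
    using xy(2,3) by (simp add: equidistant_from_rows_3_iff Q)
  moreover have "(\<Sum>i=1..3. lam i) = 1" "\<forall>i. i \<notin> {1..3} \<longrightarrow> lam i = 0"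
    unfolding sum_atLeast1_atMost_3 by (auto simp: lam_def)
  ultimately show thesis
    using that Q_simplex unfolding Q_def by blast
qed

lemma segment_equidistant_point_exists:
  assumes A: "A \<in> open_simplex" and B: "B \<in> open_simplex"
  obtains t where "0 \<le> t" "t \<le> 1"
    "KL A (\<lambda>j. (1 - t) * A j + t * B j) = KL B (\<lambda>j. (1 - t) * A j + t * B j)"
proof -
  define f where "f t = KL A (\<lambda>j. (1 - t) * A j + t * B j) - KL B (\<lambda>j. (1 - t) * A j + t * B j)" for t
  have pos: "0 < (1 - t) * A j + t * B j" if "t \<in> {0..1}" for t j
  proof -
    have "0 < A j" "0 < B j"
      using A B by (auto simp: open_simplex_def)
    with that show ?thesis
      by (cases "t = 1") (auto intro: add_pos_nonneg)
  qed
  have "continuous_on {0..1} f"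
    unfolding f_def KL_def using A B pos[THEN less_imp_neq, symmetric]
    by (intro continuous_intros) (auto simp: open_simplex_def less_imp_neq[symmetric])
  moreover have "f 0 \<le> 0" "0 \<le> f 1"
    using KL_nonneg[OF A B] KL_nonneg[OF B A] by (simp_all add: f_def)
  ultimately obtain t where "0 \<le> t" "t \<le> 1" "f t = 0"
    using IVT'[of f 0 0 1] by auto
  then show thesis
    using that by (simp add: f_def)
qed

lemma edge_equidistant_point_exists:
  assumes rows: "\<forall>i\<in>{1..3}. P i \<in> open_simplex"
  obtains mu where "mu \<in> closed_simplex 3" "mu 1 = 0"
    "output_dist 3 P mu \<in> affL [P 2, P 3]" "equidistant_from [P 2, P 3] (output_dist 3 P mu)"
proof -
  obtain t where t: "0 \<le> t" "t \<le> 1"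
    "KL (P 2) (\<lambda>j. (1 - t) * P 2 j + t * P 3 j) = KL (P 3) (\<lambda>j. (1 - t) * P 2 j + t * P 3 j)"
    using segment_equidistant_point_exists[of "P 2" "P 3"] rows by auto
  define mu where "mu i = (if i = 2 then 1 - t else if i = 3 then t else 0)" for i :: nat
  have Q: "output_dist 3 P mu = (\<lambda>j. (1 - t) * P 2 j + t * P 3 j)"
    unfolding output_dist_def sum_atLeast1_atMost_3 by (simp add: mu_def)
  have mu_simplex: "mu \<in> closed_simplex 3"
    using t unfolding closed_simplex_def sum_atLeast1_atMost_3 by (auto simp: mu_def)
  then have "output_dist 3 P mu \<in> open_simplex"
    by (rule output_dist_in_open_simplex[OF rows])
  then have "output_dist 3 P mu \<in> affL [P 2, P 3]"
    unfolding affL_def Q by (auto intro!: exI[of _ "\<lambda>i. if i = 0 then 1 - t else t"] simp: numeral_2_eq_2)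
  moreover have "equidistant_from [P 2, P 3] (output_dist 3 P mu)"
    using t(3) by (simp add: Q equidistant_from_pair_iff)
  ultimately show thesis
    using that mu_simplex by (simp add: mu_def)
qed

lemma KL_first_row_le:
  assumes rows: "\<forall>i\<in>{1..3}. P i \<in> open_simplex"
    and lam_sum: "(\<Sum>i=1..3. lam i) = 1" and lam1: "lam 1 < 0"
    and Q0: "output_dist 3 P lam \<in> open_simplex" and eqQ0: "equidistant_from (rows 3 P) (output_dist 3 P lam)"
    and Q: "Q \<in> affL [P 2, P 3]" and eqQ: "equidistant_from [P 2, P 3] Q"
  shows "KL (P 1) Q \<le> KL (P 2) Q"
proof -
  define Q0 where "Q0 = output_dist 3 P lam"
  have Q0_pos: "\<forall>j. 0 < Q0 j"
    using Q0 by (simp add: Q0_def open_simplex_def)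
  have Q_simplex: "Q \<in> open_simplex"
    using Q affL_subset_open_simplex by blast
  then have Q_pos: "\<forall>j. 0 < Q j"
    by (simp add: open_simplex_def)
  have rows_pos: "\<forall>i\<in>{1..3}. \<forall>j. 0 < P i j"
    using rows by (simp add: open_simplex_def)
  have d: "KL (P 2) Q0 = KL (P 1) Q0" "KL (P 3) Q0 = KL (P 1) Q0"
    using eqQ0 by (simp_all add: Q0_def equidistant_from_rows_3_iff)
  have K: "KL (P 3) Q = KL (P 2) Q"
    using eqQ by (simp add: equidistant_from_pair_iff)
  have "KL Q Q0 - KL Q Q = KL (P 2) Q0 - KL (P 2) Q"
    using rows_pos d
    by (intro KL_diff_equidistant[OF Q _ Q_pos Q0_pos eqQ]) (simp_all add: equidistant_from_pair_iff)
  then have KL_Q_Q0: "KL Q Q0 = KL (P 1) Q0 - KL (P 2) Q"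
    using d by simp
  have "KL Q0 Q - KL Q0 Q0 = (\<Sum>i=1..3. lam i * (KL (P i) Q - KL (P i) Q0))"
    unfolding Q0_def output_dist_def
    using rows_pos Q0_pos Q_pos by (intro KL_diff_affine) (simp_all add: Q0_def output_dist_def)
  then have "KL Q0 Q = lam 1 * (KL (P 1) Q - KL (P 1) Q0) + (lam 2 + lam 3) * (KL (P 2) Q - KL (P 1) Q0)"
    using d K unfolding sum_atLeast1_atMost_3 by (simp add: algebra_simps)
  also have "lam 2 + lam 3 = 1 - lam 1"
    using lam_sum unfolding sum_atLeast1_atMost_3 by simp
  finally have "KL Q0 Q = lam 1 * (KL (P 1) Q - KL (P 2) Q) - KL Q Q0"
    using KL_Q_Q0 by (simp add: algebra_simps)
  moreover have "0 \<le> KL Q0 Q" "0 \<le> KL Q Q0"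
    using KL_nonneg Q0 Q_simplex unfolding Q0_def by blast+
  ultimately have "0 \<le> lam 1 * (KL (P 1) Q - KL (P 2) Q)"
    by linarith
  then show ?thesis
    using lam1 by (simp add: zero_le_mult_iff)
qed

theorem theorem16:
  fixes P :: "nat \<Rightarrow> 'b::finite \<Rightarrow> real"
    and Q0 Q1 :: "'b \<Rightarrow> real" and lam0 :: "nat \<Rightarrow> real"
  assumes rows_dist: "\<forall>i\<in>{1..3::nat}. P i \<in> open_simplex"
    and gp: "general_position 3 P"
    and Q0_def: "Q0 = equidistant 3 P"
    and lam0_def: "lam0 = barycentric 3 P Q0"
    and l1: "lam0 1 < 0" and l2: "lam0 2 \<ge> 0" and l3: "lam0 3 \<ge> 0"
    and Q1_def: "Q1 = Iproj Q0 (affL [P 2, P 3])"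
  shows "capacity_output 3 P = Q1 \<and> capacity 3 P = KL (P 2) Q1"
proof -
  obtain lam where lam: "(\<Sum>i=1..3. lam i) = 1" "\<forall>i. i \<notin> {1..3} \<longrightarrow> lam i = 0"
      "output_dist 3 P lam \<in> open_simplex" "equidistant_from (rows 3 P) (output_dist 3 P lam)"
    using equidistant_point_exists[OF rows_dist gp] by blast
  have Q0: "Q0 = output_dist 3 P lam"
    unfolding Q0_def by (rule equidistant_eqI[OF rows_dist output_dist_in_affL_rows[OF lam(3,1)] lam(4)])
  have "lam0 = lam"
    unfolding lam0_def Q0 by (rule barycentric_eqI[OF gp lam(1,2)])
  obtain mu where mu: "mu \<in> closed_simplex 3" "mu 1 = 0"
      "output_dist 3 P mu \<in> affL [P 2, P 3]" "equidistant_from [P 2, P 3] (output_dist 3 P mu)"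
    using edge_equidistant_point_exists[OF rows_dist] by blast
  define Q where "Q = output_dist 3 P mu"
  have "equidistant_from [P 2, P 3] Q0"
    using lam(4) by (simp add: Q0 equidistant_from_rows_3_iff equidistant_from_pair_iff)
  then have "Q1 = Q"
    unfolding Q1_def Q_def using rows_dist lam(3)
    by (intro Iproj_eq_equidistant_point[OF mu(3) _ _ _ mu(4)]) (auto simp: Q0 open_simplex_def)
  have "KL (P 1) Q \<le> KL (P 2) Q"
    unfolding Q_def using KL_first_row_le[OF rows_dist lam(1) _ lam(3,4) mu(3,4)] l1 \<open>lam0 = lam\<close> by simp
  moreover have "KL (P 3) Q = KL (P 2) Q"
    using mu(4) by (simp add: Q_def equidistant_from_pair_iff)
  moreover have "{1..3::nat} = {1, 2, 3}"
    by auto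
  ultimately have "capacity 3 P = KL (P 2) Q \<and> capacity_output 3 P = Q"
    unfolding Q_def using mu(2) by (intro capacity_eqI[OF rows_dist mu(1)]) auto
  with \<open>Q1 = Q\<close> show ?thesis
    by simp
qed

end
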